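(* Let $\mathbb{M}$ be $\mathbb{T}^{n}$ or $\mathbb{S}^{n}$ and let $X$ be a polynomic vector field on $\mathbb{M}$. Then there exist a smooth embedding $\Psi: \mathbb{M} \rightarrow \mathbb{R}^{d}$, with $d$ depending only on $n$ and on the degree of $X$, and a homogeneous quadratic ODE on $\mathbb{R}^{d}$ \[ \frac{d y_i}{dt}=\sum_{j,k=1}^d B_{ijk} y_j y_k, \quad i=1,\dots,d, \] with real coefficients satisfying $B_{ijk}=-B_{kji}$ for all $i,j,k$, such that for every $x \in \mathbb{M}$, $y(t)=\Psi(\phi^{t}_{X}(x))$ is the solution of this ODE with initial condition $y(0)=\Psi(x)$ (here $\phi^t_X$ is the flow of $X$). Moreover, if $X$ is divergence-free on $\mathbb{M}$ (with respect to the round metric on $\mathbb{S}^n$, or the flat metric on $\mathbb{T}^{n}$), then the quadratic vector field $V(y)=\sum_{i,j,k} B_{ijk} y_j y_k \frac{\partial}{\partial y_i}$ is divergence-free on $\mathbb{R}^d$ with respect to the standard Euclidean metric.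
   Context: $\mathbb{T}^n=(\mathbb{R}/\mathbb{Z})^n$ and $\mathbb{S}^n\subset\mathbb{R}^{n+1}$ is the unit sphere. A vector field on $\mathbb{T}^n$ is called polynomic if it is a finite sum $\sum_k a_k\sin(2\pi k\cdot x)+b_k\cos(2\pi k\cdot x)$ with $k\in\mathbb{Z}^n$, $a_k,b_k\in\mathbb{R}^n$; its degree is the squared modulus $|k|^2$ of the highest frequency occurring. A vector field on $\mathbb{S}^n$ is called polynomic if it is the restriction of a polynomial vector field on $\mathbb{R}^{n+1}$ tangent to $\mathbb{S}^n$; its degree is the degree of that polynomial. *)

theory Defs
  imports "HOL-Analysis.Analysis"
begin

fun Ck :: "nat \<Rightarrow> ('a::euclidean_space \<Rightarrow> real) \<Rightarrow> bool" where
  "Ck 0 f = continuous_on UNIV f"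
| "Ck (Suc k) f = (f differentiable_on UNIV \<and>
                     (\<forall>v. Ck k (\<lambda>x. frechet_derivative f (at x) v)))"

definition smooth :: "('a::euclidean_space \<Rightarrow> real) \<Rightarrow> bool" where
  "smooth f \<longleftrightarrow> (\<forall>k. Ck k f)"

section \<open>Torus T^n = R^n / Z^n (vector fields = Z^n-periodic maps on R^n)\<close>

definition freq_dot :: "int ^ 'n \<Rightarrow> real ^ 'n \<Rightarrow> real" where
  "freq_dot k x = (\<Sum>i\<in>UNIV. of_int (k $ i) * x $ i)"

definition sqmod :: "int ^ 'n \<Rightarrow> int" where
  "sqmod k = (\<Sum>i\<in>UNIV. (k $ i)^2)"

definition torus_polynomic_le :: "nat \<Rightarrow> (real ^ 'n \<Rightarrow> real ^ 'n) \<Rightarrow> bool" where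
  "torus_polynomic_le m X \<longleftrightarrow>
     (\<exists>a b :: int ^ 'n \<Rightarrow> real ^ 'n.
        X = (\<lambda>x. \<Sum>k\<in>{k. sqmod k \<le> int m}.
                  sin (2 * pi * freq_dot k x) *\<^sub>R a k + cos (2 * pi * freq_dot k x) *\<^sub>R b k))"

definition torus_polynomic_deg :: "nat \<Rightarrow> (real ^ 'n \<Rightarrow> real ^ 'n) \<Rightarrow> bool" where
  "torus_polynomic_deg m X \<longleftrightarrow> torus_polynomic_le m X \<and> (\<forall>m'<m. \<not> torus_polynomic_le m' X)"

definition torus_divergence :: "(real ^ 'n \<Rightarrow> real ^ 'n) \<Rightarrow> real ^ 'n \<Rightarrow> real" where
  "torus_divergence X x = (\<Sum>i\<in>UNIV. deriv (\<lambda>s. X (x + s *\<^sub>R axis i 1) $ i) 0)"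

definition torus_smooth_embedding :: "nat \<Rightarrow> (nat \<Rightarrow> real ^ 'n \<Rightarrow> real) \<Rightarrow> bool" where
  "torus_smooth_embedding d \<Psi> \<longleftrightarrow>
     (\<forall>i<d. smooth (\<Psi> i)) \<and>
     (\<forall>i<d. \<forall>x k. \<Psi> i (x + (\<chi> j. of_int (k $ j))) = \<Psi> i x) \<and>
     (\<forall>x y. (\<forall>i<d. \<Psi> i x = \<Psi> i y) \<longrightarrow> (\<forall>j. x $ j - y $ j \<in> \<int>)) \<and>
     (\<forall>x v. v \<noteq> 0 \<longrightarrow> (\<exists>i<d. deriv (\<lambda>s. \<Psi> i (x + s *\<^sub>R v)) 0 \<noteq> 0))"

section \<open>Sphere S^n \<subseteq> R^(n+1)\<close>

definition monomial :: "('n \<Rightarrow> nat) \<Rightarrow> real ^ 'n \<Rightarrow> real" where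
  "monomial \<alpha> x = (\<Prod>i\<in>UNIV. (x $ i) ^ (\<alpha> i))"

definition poly_fun_le :: "nat \<Rightarrow> (real ^ 'n \<Rightarrow> real) \<Rightarrow> bool" where
  "poly_fun_le m f \<longleftrightarrow>
     (\<exists>c :: ('n \<Rightarrow> nat) \<Rightarrow> real.
        f = (\<lambda>x. \<Sum>\<alpha>\<in>{\<alpha>. (\<Sum>i\<in>UNIV. \<alpha> i) \<le> m}. c \<alpha> * monomial \<alpha> x))"

definition sphere_polynomic_le :: "nat \<Rightarrow> (real ^ 'n \<Rightarrow> real ^ 'n) \<Rightarrow> bool" where
  "sphere_polynomic_le m X \<longleftrightarrow>
     (\<exists>P :: real ^ 'n \<Rightarrow> real ^ 'n.
        (\<forall>i. poly_fun_le m (\<lambda>x. P x $ i)) \<and>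
        (\<forall>x\<in>sphere 0 1. P x \<bullet> x = 0) \<and>
        (\<forall>x\<in>sphere 0 1. X x = P x))"

definition sphere_polynomic_deg :: "nat \<Rightarrow> (real ^ 'n \<Rightarrow> real ^ 'n) \<Rightarrow> bool" where
  "sphere_polynomic_deg m X \<longleftrightarrow> sphere_polynomic_le m X \<and> (\<forall>m'<m. \<not> sphere_polynomic_le m' X)"

definition tproj :: "real ^ 'n \<Rightarrow> real ^ 'n \<Rightarrow> real ^ 'n" where
  "tproj x v = v - (v \<bullet> x) *\<^sub>R x"

text \<open>Riemannian divergence on the round sphere at x: the trace over the tangent space of the
  covariant derivative of X, computed as  sum_i < d/ds X(c_i(s)) |_{s=0}, p_i >  where p_i is the
  orthogonal projection of the i-th standard basis vector onto T_x S^n and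
  c_i(s) = (x + s p_i)/|x + s p_i| is a curve on S^n with c_i(0) = x, c_i'(0) = p_i.
  (Only values of X on S^n are used.)\<close>
definition sphere_divergence :: "(real ^ 'n \<Rightarrow> real ^ 'n) \<Rightarrow> real ^ 'n \<Rightarrow> real" where
  "sphere_divergence X x =
     (\<Sum>i\<in>UNIV. deriv (\<lambda>s. X ((x + s *\<^sub>R tproj x (axis i 1)) /\<^sub>R norm (x + s *\<^sub>R tproj x (axis i 1)))
                           \<bullet> tproj x (axis i 1)) 0)"

text \<open>Smooth embedding of S^n into R^d: d smooth functions on R^(n+1) (every smooth function on
  S^n extends to one), injective on S^n, with differential injective on each tangent space.\<close>
definition sphere_smooth_embedding :: "nat \<Rightarrow> (nat \<Rightarrow> real ^ 'n \<Rightarrow> real) \<Rightarrow> bool" where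
  "sphere_smooth_embedding d \<Psi> \<longleftrightarrow>
     (\<forall>i<d. smooth (\<Psi> i)) \<and>
     (\<forall>x\<in>sphere 0 1. \<forall>y\<in>sphere 0 1. (\<forall>i<d. \<Psi> i x = \<Psi> i y) \<longrightarrow> x = y) \<and>
     (\<forall>x\<in>sphere 0 1. \<forall>v. v \<noteq> 0 \<and> v \<bullet> x = 0 \<longrightarrow>
         (\<exists>i<d. deriv (\<lambda>s. \<Psi> i (x + s *\<^sub>R v)) 0 \<noteq> 0))"

definition quad_field :: "nat \<Rightarrow> (nat \<Rightarrow> nat \<Rightarrow> nat \<Rightarrow> real) \<Rightarrow> (nat \<Rightarrow> real) \<Rightarrow> nat \<Rightarrow> real" where
  "quad_field d B y i = (\<Sum>j<d. \<Sum>k<d. B i j k * y j * y k)"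

definition quad_div_free :: "nat \<Rightarrow> (nat \<Rightarrow> nat \<Rightarrow> nat \<Rightarrow> real) \<Rightarrow> bool" where
  "quad_div_free d B \<longleftrightarrow>
     (\<forall>y :: nat \<Rightarrow> real. (\<Sum>i<d. deriv (\<lambda>s. quad_field d B (y(i := s)) i) (y i)) = 0)"

end

theory Submission
  imports Defs
begin

(* The coordinates of the embedding are a finite family of observables f_a whose derivatives
   along any trajectory are quadratic forms sum_(b,c) W_abc f_b f_c in the family, with
   W_abc = - W_cba.  On T^n these are the Fourier modes sin (2 pi k.x), cos (2 pi k.x) with
   |k|^2 <= max m 1: the derivative of sin (2 pi k.x) is 2 pi (k.X) cos (2 pi k.x), and k.X is
   itself a combination of modes.  On S^n they are the monomials of degree 1 .. m+1: on the sphere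
   a tangent polynomial field is X(x) = Omega(x) x with the skew matrix
   Omega_ij = X_i x_j - X_j x_i, whose entries are combinations of these monomials, and the
   derivation induced by a skew matrix on a tensor power is again skew.
   Listing every observable twice and letting each copy be driven by products f_b f_c with f_b
   taken from the other copy preserves the skew symmetry and kills the diagonal coefficients
   B_iik and B_iki, so the quadratic field is divergence free whatever the divergence of X. *)

section \<open>Smoothness\<close>

lemma Ck_if_derivative_closed:
  fixes P :: "('a::euclidean_space \<Rightarrow> real) \<Rightarrow> bool"
  assumes closed: "\<And>g. P g \<Longrightarrow> \<exists>g'. (\<forall>x. (g has_derivative g' x) (at x)) \<and> (\<forall>v. P (\<lambda>x. g' x v))"
  shows "P g \<Longrightarrow> Ck k g"
proof (induction k arbitrary: g)
  case 0
  then obtain g' where "\<forall>x. (g has_derivative g' x) (at x)"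
    using closed by blast
  then have "continuous_on UNIV g"
    by (metis continuous_at_imp_continuous_on has_derivative_continuous)
  then show ?case
    by simp
next
  case (Suc k)
  then obtain g' where g': "\<forall>x. (g has_derivative g' x) (at x)" and "\<forall>v. P (\<lambda>x. g' x v)"
    using closed by blast
  then have "Ck k (\<lambda>x. g' x v)" for v
    using Suc.IH by blast
  moreover have "frechet_derivative g (at x) = g' x" for x
    using g' frechet_derivative_at by metis
  moreover have "g differentiable_on UNIV"
    using g' unfolding differentiable_on_def differentiable_def by blast
  ultimately show ?case
    by simp
qed

lemma smooth_if_derivative_closed:
  fixes P :: "('a::euclidean_space \<Rightarrow> real) \<Rightarrow> bool"
  assumes "\<And>g. P g \<Longrightarrow> \<exists>g'. (\<forall>x. (g has_derivative g' x) (at x)) \<and> (\<forall>v. P (\<lambda>x. g' x v))"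
    and "P g"
  shows "smooth g"
  using Ck_if_derivative_closed assms unfolding smooth_def by blast

lemma real_polynomial_function_has_derivative:
  fixes g :: "'a::euclidean_space \<Rightarrow> real"
  assumes "real_polynomial_function g"
  shows "\<exists>g'. (\<forall>x. (g has_derivative g' x) (at x)) \<and> (\<forall>v. real_polynomial_function (\<lambda>x. g' x v))"
  using assms
proof (induction rule: real_polynomial_function.induct)
  case (linear f)
  then show ?case
    by (intro exI[of _ "\<lambda>x. f"]) (auto intro: bounded_linear_imp_has_derivative)
next
  case (const c)
  show ?case
    by (intro exI[of _ "\<lambda>x v. 0"]) auto
next
  case (add f g)
  then obtain f' g' where "\<forall>x. (f has_derivative f' x) (at x)" "\<forall>v. real_polynomial_function (\<lambda>x. f' x v)"
    and "\<forall>x. (g has_derivative g' x) (at x)" "\<forall>v. real_polynomial_function (\<lambda>x. g' x v)"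
    by blast
  then show ?case
    by (intro exI[of _ "\<lambda>x v. f' x v + g' x v"]) (auto intro: has_derivative_add)
next
  case (mult f g)
  then obtain f' g' where f': "\<forall>x. (f has_derivative f' x) (at x)" "\<forall>v. real_polynomial_function (\<lambda>x. f' x v)"
    and g': "\<forall>x. (g has_derivative g' x) (at x)" "\<forall>v. real_polynomial_function (\<lambda>x. g' x v)"
    by blast
  have "((\<lambda>x. f x * g x) has_derivative (\<lambda>v. f x * g' x v + f' x v * g x)) (at x)" for x
    using has_derivative_mult[OF f'(1)[rule_format] g'(1)[rule_format]] by simp
  moreover have "real_polynomial_function (\<lambda>x. f x * g' x v + f' x v * g x)" for v
    using mult.hyps f'(2) g'(2) by (intro real_polynomial_function.intros(3,4)) auto
  ultimately show ?case
    by (intro exI[of _ "\<lambda>x v. f x * g' x v + f' x v * g x"]) blast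
qed

lemma smooth_real_polynomial_function:
  fixes g :: "'a::euclidean_space \<Rightarrow> real"
  shows "real_polynomial_function g \<Longrightarrow> smooth g"
  using smooth_if_derivative_closed real_polynomial_function_has_derivative by blast

lemma smooth_sin_inner:
  fixes \<kappa> :: "'a::euclidean_space"
  shows "smooth (\<lambda>x. sin (\<kappa> \<bullet> x + \<phi>))"
proof -
  let ?P = "\<lambda>g::'a \<Rightarrow> real. \<exists>c \<kappa> \<phi>. g = (\<lambda>x. c * sin (\<kappa> \<bullet> x + \<phi>))"
  have closed: "\<exists>g'. (\<forall>x. (g has_derivative g' x) (at x)) \<and> (\<forall>v. ?P (\<lambda>x. g' x v))" if "?P g" for g
  proof -
    obtain c \<kappa> \<phi> where g: "g = (\<lambda>x. c * sin (\<kappa> \<bullet> x + \<phi>))"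
      using \<open>?P g\<close> by blast
    have "(g has_derivative (\<lambda>v. c * (cos (\<kappa> \<bullet> x + \<phi>) * (\<kappa> \<bullet> v)))) (at x)" for x
      unfolding g by (auto intro!: derivative_eq_intros)
    moreover have "?P (\<lambda>x. c * (cos (\<kappa> \<bullet> x + \<phi>) * (\<kappa> \<bullet> v)))" for v
      by (intro exI[of _ "c * (\<kappa> \<bullet> v)"] exI[of _ \<kappa>] exI[of _ "\<phi> + pi/2"])
        (simp add: sin_add cos_add algebra_simps)
    ultimately show ?thesis
      by (intro exI[of _ "\<lambda>x v. c * (cos (\<kappa> \<bullet> x + \<phi>) * (\<kappa> \<bullet> v))"]) blast
  qed
  have "?P (\<lambda>x. sin (\<kappa> \<bullet> x + \<phi>))"
    by (rule exI[of _ 1], rule exI[of _ \<kappa>], rule exI[of _ \<phi>]) simp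
  then show ?thesis
    using smooth_if_derivative_closed[where P = ?P, OF closed] by blast
qed

section \<open>Skew-symmetric quadratic systems\<close>

lemma quad_div_free_if_diagonal_vanishes:
  assumes "\<And>i k. i < d \<Longrightarrow> k < d \<Longrightarrow> B i i k = 0 \<and> B i k i = 0"
  shows "quad_div_free d B"
  unfolding quad_div_free_def
proof (intro allI sum.neutral ballI)
  fix y :: "nat \<Rightarrow> real" and i
  assume "i \<in> {..<d}"
  then have "quad_field d B (y(i := s)) i = quad_field d B y i" for s
    unfolding quad_field_def using assms by (intro sum.cong refl) auto
  then show "deriv (\<lambda>s. quad_field d B (y(i := s)) i) (y i) = 0"
    by simp
qed

lemma quad_field_reindex:
  assumes "bij_betw h {..<d} J"
  shows "quad_field d (\<lambda>i j k. C (h i) (h j) (h k)) (\<lambda>j. z (h j)) i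
           = (\<Sum>q\<in>J. \<Sum>r\<in>J. C (h i) q r * z q * z r)"
  unfolding quad_field_def
  using sum.reindex_bij_betw[OF assms, of "\<lambda>q. \<Sum>r\<in>J. C (h i) q r * z q * z r"]
    sum.reindex_bij_betw[OF assms, of "\<lambda>r. C (h i) _ r * _ * z r"]
  by simp

lemma sum_times_UNIV_bool:
  "(\<Sum>q\<in>I \<times> UNIV. g q) = (\<Sum>b\<in>I. g (b, True) + g (b, False))"
  using sum.cartesian_product[where g = "\<lambda>b t. g (b, t)" and A = I and B = UNIV] by (simp add: UNIV_bool add.commute)

lemma skew_quadratic_doubling:
  fixes W :: "'i \<Rightarrow> 'i \<Rightarrow> 'i \<Rightarrow> real"
  assumes "finite I"
    and skew: "\<And>a b c. a \<in> I \<Longrightarrow> b \<in> I \<Longrightarrow> c \<in> I \<Longrightarrow> W a b c = - W c b a"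
  defines "d \<equiv> 2 * card I"
  obtains e :: "nat \<Rightarrow> 'i" and B
  where "e ` {..<d} = I"
    and "\<forall>i<d. \<forall>j<d. \<forall>k<d. B i j k = - B k j i"
    and "quad_div_free d B"
    and "\<And>i z. i < d \<Longrightarrow> quad_field d B (\<lambda>j. z (e j)) i = (\<Sum>b\<in>I. \<Sum>c\<in>I. W (e i) b c * z b * z c)"
proof -
  define J where "J = I \<times> (UNIV :: bool set)"
  have "card J = d"
    by (simp add: J_def d_def card_cartesian_product)
  then obtain h where h: "bij_betw h {..<d} J"
    using ex_bij_betw_nat_finite[of J] \<open>finite I\<close> by (auto simp: J_def atLeast0LessThan)
  then have hJ: "h i \<in> J" if "i < d" for i
    using that by (auto simp: bij_betw_def)
  define W2 where "W2 p q r = (if snd q \<noteq> snd p \<and> snd r = snd p then W (fst p) (fst q) (fst r) else 0)"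
    for p q r :: "'i \<times> bool"
  define B where "B i j k = W2 (h i) (h j) (h k)" for i j k
  have W2_skew: "W2 p q r = - W2 r q p" if "p \<in> J" "q \<in> J" "r \<in> J" for p q r
    using that skew[of "fst p" "fst q" "fst r"] by (auto simp: W2_def J_def)
  have W2_diag: "W2 p p r = 0" for p r
    by (simp add: W2_def)
  have W2_antidiag: "W2 p q p = 0" if "p \<in> J" "q \<in> J" for p q
    using W2_skew[OF that(1,2,1)] by simp
  show ?thesis
  proof (rule that[of "fst \<circ> h" B])
    show "(fst \<circ> h) ` {..<d} = I"
      using image_comp[of fst h "{..<d}"] bij_betw_imp_surj_on[OF h] by (simp add: J_def)
    show "\<forall>i<d. \<forall>j<d. \<forall>k<d. B i j k = - B k j i"
      unfolding B_def using W2_skew hJ by blast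
    show "quad_div_free d B"
      using hJ by (intro quad_div_free_if_diagonal_vanishes) (simp add: B_def W2_diag W2_antidiag)
  next
    fix i z
    assume "i < d"
    obtain a s where a: "h i = (a, s)"
      by fastforce
    have "quad_field d B (\<lambda>j. z ((fst \<circ> h) j)) i = (\<Sum>q\<in>J. \<Sum>r\<in>J. W2 (h i) q r * z (fst q) * z (fst r))"
      using quad_field_reindex[OF h, of W2 "z \<circ> fst" i] by (simp add: B_def[abs_def])
    also have "\<dots> = (\<Sum>b\<in>I. \<Sum>c\<in>I. W a b c * z b * z c)"
      unfolding J_def sum_times_UNIV_bool a by (cases s) (simp_all add: W2_def sum.distrib)
    finally show "quad_field d B (\<lambda>j. z ((fst \<circ> h) j)) i = (\<Sum>b\<in>I. \<Sum>c\<in>I. W ((fst \<circ> h) i) b c * z b * z c)"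
      by (simp add: a)
  qed
qed

section \<open>The torus\<close>

definition frequencies :: "nat \<Rightarrow> (int ^ 'n) set" where
  "frequencies M = {k. sqmod k \<le> int M}"

lemma finite_frequencies: "finite (frequencies M)"
proof -
  have "\<bar>k $ i\<bar> \<le> int M" if "k \<in> frequencies M" for k :: "int ^ 'n" and i
  proof -
    have "\<bar>k $ i\<bar> \<le> \<bar>k $ i\<bar>\<^sup>2" if "k $ i \<noteq> 0"
      using that by (intro self_le_power) auto
    then have "\<bar>k $ i\<bar> \<le> (k $ i)\<^sup>2"
      by (cases "k $ i = 0") simp_all
    also have "\<dots> \<le> sqmod k"
      unfolding sqmod_def by (rule member_le_sum) auto
    finally show ?thesis
      using that by (simp add: frequencies_def)
  qed
  then have "vec_nth k \<in> UNIV \<rightarrow>\<^sub>E {-int M..int M}" if "k \<in> frequencies M" for k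
    using that by (force simp: abs_le_iff)
  then have "frequencies M \<subseteq> vec_lambda ` (UNIV \<rightarrow>\<^sub>E {-int M..int M})"
    by (metis image_eqI subsetI vec_lambda_eta)
  then show ?thesis
    by (rule finite_subset) (intro finite_imageI finite_PiE; simp)
qed

lemma freq_dot_eq_inner: "freq_dot k x = (\<chi> i. real_of_int (k $ i)) \<bullet> x"
  by (simp add: freq_dot_def inner_vec_def)

lemma freq_dot_add: "freq_dot k (x + y) = freq_dot k x + freq_dot k y"
  by (simp add: freq_dot_eq_inner inner_add_right)

lemma freq_dot_of_int: "freq_dot k (\<chi> j. real_of_int (l $ j)) = real_of_int (\<Sum>i\<in>UNIV. k $ i * l $ i)"
  by (simp add: freq_dot_def)

lemma freq_dot_axis: "freq_dot (axis j 1) x = x $ j"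
  by (simp add: freq_dot_def axis_def if_distrib[of real_of_int] if_distrib[of "\<lambda>z. z * _"] cong: if_cong)

lemma sqmod_axis: "sqmod (axis j (1::int)) = 1"
  by (simp add: sqmod_def axis_def if_distrib[of "\<lambda>z. z^2"] cong: if_cong)

definition fourier_mode :: "(int ^ 'n) \<times> bool \<Rightarrow> real ^ 'n \<Rightarrow> real" where
  "fourier_mode q x =
     (if snd q then sin (2 * pi * freq_dot (fst q) x) else cos (2 * pi * freq_dot (fst q) x))"

lemma smooth_fourier_mode: "smooth (fourier_mode q)"
proof -
  have "fourier_mode q = (\<lambda>x. sin ((2 * pi) *\<^sub>R (\<chi> i. real_of_int (fst q $ i)) \<bullet> x + (if snd q then 0 else pi/2)))"
    by (auto simp: fourier_mode_def freq_dot_eq_inner sin_add)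
  then show ?thesis
    by (simp only: smooth_sin_inner)
qed

lemma fourier_mode_periodic: "fourier_mode q (x + (\<chi> j. of_int (l $ j))) = fourier_mode q x"
proof -
  have "sin (y + 2 * pi * of_int n) = sin y" "cos (y + 2 * pi * of_int n) = cos y" for y n
    by (simp_all add: sin_add cos_add)
  then show ?thesis
    by (simp only: fourier_mode_def freq_dot_add freq_dot_of_int distrib_left)
qed

lemma fourier_mode_has_real_derivative:
  assumes "(\<gamma> has_vector_derivative v) (at t)"
  shows "((\<lambda>s. fourier_mode q (\<gamma> s)) has_real_derivative
           (if snd q then 2 * pi else - 2 * pi) * freq_dot (fst q) v * fourier_mode (fst q, \<not> snd q) (\<gamma> t)) (at t)"
proof -
  define \<kappa> where "\<kappa> = (\<chi> i. real_of_int (fst q $ i))"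
  have "((\<lambda>s. \<kappa> \<bullet> \<gamma> s) has_real_derivative \<kappa> \<bullet> v) (at t)"
    using bounded_linear.has_vector_derivative[OF bounded_linear_inner_right assms]
    by (simp add: has_real_derivative_iff_has_vector_derivative)
  then have "((\<lambda>s. 2 * pi * (\<kappa> \<bullet> \<gamma> s)) has_real_derivative 2 * pi * (\<kappa> \<bullet> v)) (at t)"
    by (rule DERIV_cmult)
  from DERIV_fun_sin[OF this] DERIV_fun_cos[OF this] show ?thesis
    by (cases "snd q") (simp_all add: fourier_mode_def freq_dot_eq_inner \<kappa>_def[symmetric] mult_ac)
qed

lemma torus_polynomic_le_fourier_expansion:
  fixes X :: "real ^ 'n \<Rightarrow> real ^ 'n"
  assumes "torus_polynomic_le m X" and "m \<le> M"
  obtains c where "\<And>x. X x = (\<Sum>q\<in>frequencies M \<times> UNIV. fourier_mode q x *\<^sub>R c q)"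
proof -
  obtain a b :: "int ^ 'n \<Rightarrow> real ^ 'n" where X: "X = (\<lambda>x. \<Sum>k\<in>frequencies m.
      sin (2 * pi * freq_dot k x) *\<^sub>R a k + cos (2 * pi * freq_dot k x) *\<^sub>R b k)"
    using assms(1) unfolding torus_polynomic_le_def frequencies_def by blast
  define c where "c q = (if fst q \<in> frequencies m then if snd q then a (fst q) else b (fst q) else 0)"
    for q :: "(int ^ 'n) \<times> bool"
  have "frequencies m \<subseteq> frequencies M"
    using assms(2) by (auto simp: frequencies_def)
  then have "X x = (\<Sum>k\<in>frequencies M. fourier_mode (k, True) x *\<^sub>R c (k, True) + fourier_mode (k, False) x *\<^sub>R c (k, False))" for x
    unfolding X by (intro sum.mono_neutral_cong_left finite_frequencies) (auto simp: c_def fourier_mode_def)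
  then show ?thesis
    by (intro that) (simp add: sum_times_UNIV_bool)
qed

lemma torus_smooth_embedding_fourier_modes:
  fixes \<Psi> :: "nat \<Rightarrow> real ^ 'n \<Rightarrow> real"
  assumes \<Psi>: "\<Psi> ` {..<d} = fourier_mode ` Q" and axes: "\<And>j s. (axis j 1, s) \<in> Q"
  shows "torus_smooth_embedding d \<Psi>"
  unfolding torus_smooth_embedding_def
proof (intro conjI allI impI)
  fix i assume "i < d"
  then obtain q where q: "\<Psi> i = fourier_mode q"
    using \<Psi> by blast
  then show "smooth (\<Psi> i)"
    by (simp add: smooth_fourier_mode)
  show "\<Psi> i (x + (\<chi> j. of_int (k $ j))) = \<Psi> i x" for x k
    by (simp add: q fourier_mode_periodic)
next
  fix x y :: "real ^ 'n" and j
  assume "\<forall>i<d. \<Psi> i x = \<Psi> i y"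
  moreover have "\<exists>i<d. \<Psi> i = fourier_mode q" if "q \<in> Q" for q
    using that \<Psi> by (metis imageE imageI lessThan_iff)
  ultimately have "fourier_mode q x = fourier_mode q y" if "q \<in> Q" for q
    using that by metis
  from this[OF axes[of j True]] this[OF axes[of j False]]
  obtain n :: int where "2 * pi * x $ j = 2 * pi * y $ j + 2 * pi * n"
    using sin_cos_eq_iff by (auto simp: fourier_mode_def freq_dot_axis)
  then have "2 * pi * (x $ j - y $ j) = 2 * pi * of_int n"
    by (simp add: algebra_simps)
  then have "x $ j - y $ j = of_int n"
    by simp
  then show "x $ j - y $ j \<in> \<int>"
    by simp
next
  fix x v :: "real ^ 'n"
  assume "v \<noteq> 0"
  then obtain j where "v $ j \<noteq> 0"
    by (metis vec_eq_iff zero_index)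
  have "((\<lambda>s. 2 * pi * freq_dot (axis j 1) (x + s *\<^sub>R v)) has_real_derivative 2 * pi * v $ j) (at 0)"
    unfolding freq_dot_axis by (auto intro!: derivative_eq_intros)
  from DERIV_fun_sin[OF this] DERIV_fun_cos[OF this]
  have "deriv (\<lambda>s. fourier_mode (axis j 1, True) (x + s *\<^sub>R v)) 0 = cos (2 * pi * x $ j) * (2 * pi * v $ j)"
    and "deriv (\<lambda>s. fourier_mode (axis j 1, False) (x + s *\<^sub>R v)) 0 = - sin (2 * pi * x $ j) * (2 * pi * v $ j)"
    by (auto simp: fourier_mode_def freq_dot_axis intro!: DERIV_imp_deriv)
  moreover have "cos (2 * pi * x $ j) \<noteq> 0 \<or> sin (2 * pi * x $ j) \<noteq> 0"
    by (metis sin_cos_squared_add power_zero_numeral add_0 zero_neq_one)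
  ultimately have "deriv (\<lambda>s'. fourier_mode (axis j 1, s) (x + s' *\<^sub>R v)) 0 \<noteq> 0
      \<or> deriv (\<lambda>s'. fourier_mode (axis j 1, \<not> s) (x + s' *\<^sub>R v)) 0 \<noteq> 0" for s
    using \<open>v $ j \<noteq> 0\<close> by (cases s) auto
  then obtain s where "deriv (\<lambda>s'. fourier_mode (axis j 1, s) (x + s' *\<^sub>R v)) 0 \<noteq> 0"
    by blast
  moreover have "fourier_mode (axis j 1, s) \<in> \<Psi> ` {..<d}"
    using \<Psi> axes by simp
  then obtain i where "i < d" "\<Psi> i = fourier_mode (axis j 1, s)"
    by auto
  ultimately show "\<exists>i<d. deriv (\<lambda>s. \<Psi> i (x + s *\<^sub>R v)) 0 \<noteq> 0"
    by auto
qed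

lemma torus_quadratic_embedding:
  fixes X :: "real ^ 'n \<Rightarrow> real ^ 'n"
  assumes "torus_polynomic_le m X"
  defines "d \<equiv> 2 * card (frequencies (max m 1) \<times> (UNIV :: bool set) :: ((int ^ 'n) \<times> bool) set)"
  shows "\<exists>\<Psi> B. torus_smooth_embedding d \<Psi> \<and> (\<forall>i<d. \<forall>j<d. \<forall>k<d. B i j k = - B k j i) \<and>
     (\<forall>\<gamma>. (\<forall>t. (\<gamma> has_vector_derivative X (\<gamma> t)) (at t)) \<longrightarrow>
        (\<forall>t. \<forall>i<d. ((\<lambda>s. \<Psi> i (\<gamma> s)) has_real_derivative quad_field d B (\<lambda>j. \<Psi> j (\<gamma> t)) i) (at t))) \<and>
     quad_div_free d B"
proof -
  \<comment> \<open>\<open>max m 1\<close>: the coordinate modes, \<open>|k|\<^sup>2 = 1\<close>, are needed for the embedding even if \<open>m = 0\<close>\<close>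
  define Q :: "((int ^ 'n) \<times> bool) set" where "Q = frequencies (max m 1) \<times> UNIV"
  have "finite Q"
    by (simp add: Q_def finite_frequencies)
  obtain c where X: "\<And>x. X x = (\<Sum>q\<in>Q. fourier_mode q x *\<^sub>R c q)"
    using torus_polynomic_le_fourier_expansion[OF assms(1) max.cobounded1[of m 1]] unfolding Q_def by blast
  define \<sigma> :: "(int ^ 'n) \<times> bool \<Rightarrow> real" where "\<sigma> p = (if snd p then 2 * pi else - 2 * pi)" for p
  define W where "W p q r = (if r = (fst p, \<not> snd p) then \<sigma> p * freq_dot (fst p) (c q) else 0)"
    for p q r :: "(int ^ 'n) \<times> bool"
  have W_skew: "W p q r = - W r q p" for p q r
  proof (cases "r = (fst p, \<not> snd p)")
    case True
    then have "p = (fst r, \<not> snd r)"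
      by auto
    with True show ?thesis
      by (simp add: W_def \<sigma>_def)
  next
    case False
    then have "p \<noteq> (fst r, \<not> snd r)"
      by auto
    with False show ?thesis
      by (simp add: W_def)
  qed
  have mode_dynamics: "\<sigma> p * freq_dot (fst p) (X x) * fourier_mode (fst p, \<not> snd p) x
      = (\<Sum>q\<in>Q. \<Sum>r\<in>Q. W p q r * fourier_mode q x * fourier_mode r x)" if "p \<in> Q" for p x
  proof -
    have "(fst p, \<not> snd p) \<in> Q"
      using that by (auto simp: Q_def)
    then have "(\<Sum>r\<in>Q. W p q r * fourier_mode q x * fourier_mode r x)
        = \<sigma> p * freq_dot (fst p) (c q) * fourier_mode q x * fourier_mode (fst p, \<not> snd p) x" for q
      using \<open>finite Q\<close> by (simp add: W_def if_distrib[of "\<lambda>w. w * _"] cong: if_cong)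
    moreover have "freq_dot (fst p) (X x) = (\<Sum>q\<in>Q. fourier_mode q x * freq_dot (fst p) (c q))"
      by (simp add: X freq_dot_eq_inner inner_sum_right)
    ultimately show ?thesis
      by (simp add: sum_distrib_left sum_distrib_right mult_ac)
  qed
  have d: "d = 2 * card Q"
    by (simp add: d_def Q_def)
  obtain e B where e: "e ` {..<d} = Q"
    and B_skew: "\<forall>i<d. \<forall>j<d. \<forall>k<d. B i j k = - B k j i" and "quad_div_free d B"
    and quad_field_e: "\<And>i z. i < d \<Longrightarrow> quad_field d B (\<lambda>j. z (e j)) i = (\<Sum>q\<in>Q. \<Sum>r\<in>Q. W (e i) q r * z q * z r)"
    by (rule skew_quadratic_doubling[where W = W, OF \<open>finite Q\<close> W_skew, folded d]) (rule that)
  define \<Psi> where "\<Psi> j = fourier_mode (e j)" for j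
  have "\<Psi> ` {..<d} = fourier_mode ` Q"
    unfolding \<Psi>_def e[symmetric] by (simp add: image_image)
  then have "torus_smooth_embedding d \<Psi>"
    by (rule torus_smooth_embedding_fourier_modes) (simp add: Q_def frequencies_def sqmod_axis)
  moreover have "((\<lambda>s. \<Psi> i (\<gamma> s)) has_real_derivative quad_field d B (\<lambda>j. \<Psi> j (\<gamma> t)) i) (at t)"
    if "\<forall>t. (\<gamma> has_vector_derivative X (\<gamma> t)) (at t)" and "i < d" for \<gamma> t i
    using fourier_mode_has_real_derivative[of \<gamma> "X (\<gamma> t)" t "e i"] that e
      mode_dynamics[of "e i" "\<gamma> t"] quad_field_e[of i "\<lambda>q. fourier_mode q (\<gamma> t)"]
    by (auto simp: \<Psi>_def \<sigma>_def)
  ultimately show ?thesis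
    using B_skew \<open>quad_div_free d B\<close> by blast
qed

section \<open>The sphere\<close>

definition word_prod :: "'n list \<Rightarrow> real ^ 'n \<Rightarrow> real" where
  "word_prod w x = (\<Prod>i\<leftarrow>w. x $ i)"

lemma word_prod_simps [simp]:
  "word_prod [] x = 1"
  "word_prod (a # w) x = x $ a * word_prod w x"
  by (simp_all add: word_prod_def)

lemma word_prod_append: "word_prod (u @ w) x = word_prod u x * word_prod w x"
  by (simp add: word_prod_def)

lemma real_polynomial_function_word_prod: "real_polynomial_function (word_prod w)"
proof (induction w)
  case Nil
  then show ?case
    by (simp add: word_prod_def[abs_def] real_polynomial_function.intros(2))
next
  case (Cons a w)
  have "real_polynomial_function (\<lambda>x. x $ a * word_prod w x)"
    using Cons real_polynomial_function.intros(1)[OF bounded_linear_vec_nth]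
    by (intro real_polynomial_function.intros(4)) auto
  then show ?case
    by (simp add: word_prod_def[abs_def])
qed

lemma finite_lists_length_le_UNIV: "finite {w :: ('n::finite) list. length w \<le> L}"
  using finite_lists_length_le[of "UNIV :: 'n set" L] by simp

lemma finite_lists_length_eq_UNIV: "finite {w :: ('n::finite) list. length w = L}"
  using finite_lists_length_eq[of "UNIV :: 'n set" L] by simp

lemma sum_lists_length_Suc:
  "(\<Sum>v | length v = Suc L. g v) = (\<Sum>b\<in>UNIV. \<Sum>w | length w = L. g (b # w :: ('n::finite) list))"
proof -
  have Suc: "{v. length v = Suc L} = (\<lambda>(b, w). b # w) ` (UNIV \<times> {w. length w = L})"
    by (auto simp: length_Suc_conv image_iff)
  have inj: "inj_on (\<lambda>(b, w). b # w) (UNIV \<times> {w :: 'n list. length w = L})"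
    by (auto simp: inj_on_def)
  have "(\<Sum>v | length v = Suc L. g v) = (\<Sum>p\<in>UNIV \<times> {w. length w = L}. g (fst p # snd p))"
    unfolding Suc by (subst sum.reindex[OF inj]) (simp add: case_prod_beta)
  also have "\<dots> = (\<Sum>b\<in>UNIV. \<Sum>w | length w = L. g (b # w))"
    by (simp add: sum.cartesian_product case_prod_beta)
  finally show ?thesis .
qed

lemma poly_fun_le_word_expansion:
  fixes g :: "real ^ 'n \<Rightarrow> real"
  assumes "poly_fun_le m g"
  obtains c where "\<And>x. g x = (\<Sum>w | length w \<le> m. c w * word_prod w x)"
proof -
  define A where "A = {\<alpha> :: 'n \<Rightarrow> nat. (\<Sum>i\<in>UNIV. \<alpha> i) \<le> m}"
  obtain a where g: "g = (\<lambda>x. \<Sum>\<alpha>\<in>A. a \<alpha> * monomial \<alpha> x)"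
    using assms unfolding poly_fun_le_def A_def[symmetric] by blast
  have "\<alpha> i \<le> m" if "\<alpha> \<in> A" for \<alpha> i
    using that member_le_sum[of i UNIV \<alpha>] by (simp add: A_def)
  then have "A \<subseteq> UNIV \<rightarrow>\<^sub>E {..m}"
    by (auto simp: PiE_UNIV_domain)
  then have "finite A"
    by (rule finite_subset) (simp add: finite_PiE)
  obtain ns where "set ns = (UNIV :: 'n set)" "distinct ns"
    using finite_distinct_list[of "UNIV :: 'n set"] by auto
  define word where "word \<alpha> = concat (map (\<lambda>i. replicate (\<alpha> i) i) ns)" for \<alpha> :: "'n \<Rightarrow> nat"
  have word_prod_word: "word_prod (word \<alpha>) x = monomial \<alpha> x" for \<alpha> x
  proof -
    have "word_prod (concat ws) x = (\<Prod>w\<leftarrow>ws. word_prod w x)" for ws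
      by (induction ws) (simp_all add: word_prod_append)
    then have "word_prod (word \<alpha>) x = (\<Prod>i\<leftarrow>ns. x $ i ^ \<alpha> i)"
      by (simp add: word_def o_def word_prod_def)
    also have "\<dots> = monomial \<alpha> x"
      using prod.distinct_set_conv_list[OF \<open>distinct ns\<close>, of "\<lambda>i. x $ i ^ \<alpha> i"] \<open>set ns = UNIV\<close>
      by (simp add: monomial_def)
    finally show ?thesis .
  qed
  have "length (word \<alpha>) = (\<Sum>i\<in>UNIV. \<alpha> i)" for \<alpha>
    using sum.distinct_set_conv_list[OF \<open>distinct ns\<close>, of \<alpha>] \<open>set ns = UNIV\<close>
    by (simp add: word_def length_concat o_def)
  then have word_A: "word ` A \<subseteq> {w. length w \<le> m}"
    by (auto simp: A_def)
  define c where "c w = (\<Sum>\<alpha> | \<alpha> \<in> A \<and> word \<alpha> = w. a \<alpha>)" for w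
  have "g x = (\<Sum>w | length w \<le> m. c w * word_prod w x)" for x
  proof -
    have "g x = (\<Sum>\<alpha>\<in>A. a \<alpha> * word_prod (word \<alpha>) x)"
      by (simp add: g word_prod_word)
    also have "\<dots> = (\<Sum>w | length w \<le> m. \<Sum>\<alpha> | \<alpha> \<in> A \<and> word \<alpha> = w. a \<alpha> * word_prod (word \<alpha>) x)"
      by (rule sum.group[OF \<open>finite A\<close> finite_lists_length_le_UNIV word_A, symmetric])
    also have "\<dots> = (\<Sum>w | length w \<le> m. c w * word_prod w x)"
      unfolding c_def sum_distrib_right by (intro sum.cong refl) auto
    finally show ?thesis .
  qed
  then show ?thesis
    by (rule that)
qed

text \<open>Monomials are indexed by words rather than multi-indices, so that those of degree \<open>L\<close>
  form the basis of the \<open>L\<close>-th tensor power, on which a matrix \<open>\<Omega>\<close> acts as the derivation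
  \<open>tensor_lift \<Omega>\<close>: its entry at \<open>(w, v)\<close> is the sum of \<open>\<Omega> (w ! p) (v ! p)\<close> over the
  positions \<open>p\<close> outside of which \<open>w\<close> and \<open>v\<close> agree.\<close>

fun tensor_lift :: "('n \<Rightarrow> 'n \<Rightarrow> real) \<Rightarrow> 'n list \<Rightarrow> 'n list \<Rightarrow> real" where
  "tensor_lift \<Omega> (a # w) (b # v) = (if w = v then \<Omega> a b else 0) + (if a = b then tensor_lift \<Omega> w v else 0)"
| "tensor_lift \<Omega> _ _ = 0"

lemma tensor_lift_skew:
  assumes "\<And>i j. \<Omega> j i = - \<Omega> i j"
  shows "tensor_lift \<Omega> v w = - tensor_lift \<Omega> w v"
proof (induction w arbitrary: v)
  case Nil
  then show ?case
    by (cases v) auto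
next
  case (Cons a w)
  show ?case
  proof (cases v)
    case (Cons b u)
    then show ?thesis
      using Cons.IH[of u] assms[of a b] by auto
  qed simp
qed

lemma tensor_lift_length_neq: "length w \<noteq> length v \<Longrightarrow> tensor_lift \<Omega> w v = 0"
proof (induction w arbitrary: v)
  case (Cons a w)
  then show ?case
    by (cases v) auto
qed simp

lemma tensor_lift_sum:
  "tensor_lift (\<lambda>i j. \<Sum>b\<in>I. \<omega> i b j * z b) w v = (\<Sum>b\<in>I. tensor_lift (\<lambda>i j. \<omega> i b j) w v * z b)"
proof (induction w arbitrary: v)
  case (Cons a w)
  then show ?case
    by (cases v) (simp_all add: sum.distrib distrib_right)
qed simp

lemma word_prod_has_real_derivative:
  fixes \<gamma> :: "real \<Rightarrow> real ^ 'n"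
  assumes "\<And>i. ((\<lambda>s. \<gamma> s $ i) has_real_derivative (\<Sum>j\<in>UNIV. \<Omega> i j * \<gamma> t $ j)) (at t)"
  shows "((\<lambda>s. word_prod w (\<gamma> s)) has_real_derivative
           (\<Sum>v | length v = length w. tensor_lift \<Omega> w v * word_prod v (\<gamma> t))) (at t)"
proof (induction w)
  case Nil
  then show ?case
    by simp
next
  case (Cons a w)
  let ?x = "\<gamma> t" and ?L = "{v. length v = length w}"
  have "w \<in> ?L"
    by simp
  have sum_if: "(\<Sum>v\<in>?L. if P then F v else 0) = (if P then sum F ?L else (0::real))" for P F
    by simp
  have "(\<Sum>v | length v = length (a # w). tensor_lift \<Omega> (a # w) v * word_prod v ?x)
      = (\<Sum>b\<in>UNIV. \<Sum>v\<in>?L. tensor_lift \<Omega> (a # w) (b # v) * word_prod (b # v) ?x)"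
    by (simp add: sum_lists_length_Suc)
  also have "\<dots> = (\<Sum>b\<in>UNIV. \<Sum>v\<in>?L. (if v = w then \<Omega> a b * (?x $ b * word_prod w ?x) else 0)
                  + (if b = a then tensor_lift \<Omega> w v * (?x $ a * word_prod v ?x) else 0))"
    by (intro sum.cong refl) (auto simp: distrib_right)
  also have "\<dots> = (\<Sum>b\<in>UNIV. \<Omega> a b * (?x $ b * word_prod w ?x)
                  + (if b = a then (\<Sum>v\<in>?L. tensor_lift \<Omega> w v * (?x $ a * word_prod v ?x)) else 0))"
    using \<open>w \<in> ?L\<close> by (simp add: sum.distrib finite_lists_length_eq_UNIV sum.delta sum_if)
  also have "\<dots> = (\<Sum>j\<in>UNIV. \<Omega> a j * ?x $ j) * word_prod w ?x
                 + (\<Sum>v\<in>?L. tensor_lift \<Omega> w v * word_prod v ?x) * ?x $ a"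
    by (simp add: sum.distrib sum_distrib_left sum_distrib_right mult_ac)
  finally have eq: "(\<Sum>v | length v = length (a # w). tensor_lift \<Omega> (a # w) v * word_prod v ?x)
      = (\<Sum>j\<in>UNIV. \<Omega> a j * ?x $ j) * word_prod w ?x
        + (\<Sum>v\<in>?L. tensor_lift \<Omega> w v * word_prod v ?x) * ?x $ a" .
  have "((\<lambda>s. \<gamma> s $ a * word_prod w (\<gamma> s)) has_real_derivative
      (\<Sum>j\<in>UNIV. \<Omega> a j * ?x $ j) * word_prod w ?x + (\<Sum>v\<in>?L. tensor_lift \<Omega> w v * word_prod v ?x) * ?x $ a) (at t)"
    by (rule DERIV_mult[OF assms Cons.IH])
  then show ?case
    by (simp only: eq word_prod_simps)
qed

lemma tangent_vector_eq_rotation: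
  fixes p x :: "real ^ 'n"
  assumes "x \<bullet> x = 1" and "p \<bullet> x = 0"
  shows "p $ i = (\<Sum>j\<in>UNIV. (p $ i * x $ j - p $ j * x $ i) * x $ j)"
proof -
  have "(\<Sum>j\<in>UNIV. (p $ i * x $ j - p $ j * x $ i) * x $ j) = p $ i * (x \<bullet> x) - x $ i * (p \<bullet> x)"
    by (simp add: inner_vec_def left_diff_distrib right_diff_distrib sum_subtractf sum_distrib_left mult_ac)
  then show ?thesis
    using assms by simp
qed

lemma sphere_smooth_embedding_word_prods:
  fixes \<Psi> :: "nat \<Rightarrow> real ^ 'n \<Rightarrow> real"
  assumes \<Psi>: "\<Psi> ` {..<d} = word_prod ` Q" and letters: "\<And>j. [j] \<in> Q"
  shows "sphere_smooth_embedding d \<Psi>"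
  unfolding sphere_smooth_embedding_def
proof (intro conjI ballI allI impI)
  have letter_index: "\<exists>i<d. \<Psi> i = word_prod [j]" for j
  proof -
    have "word_prod [j] \<in> \<Psi> ` {..<d}"
      using \<Psi> letters by simp
    then show ?thesis
      by force
  qed
  show "smooth (\<Psi> i)" if "i < d" for i
  proof -
    have "\<Psi> i \<in> word_prod ` Q"
      using that by (simp flip: \<Psi>)
    then obtain w where "\<Psi> i = word_prod w"
      by blast
    then show ?thesis
      by (simp add: smooth_real_polynomial_function real_polynomial_function_word_prod)
  qed
  show "x = y" if "\<forall>i<d. \<Psi> i x = \<Psi> i y" for x y :: "real ^ 'n"
  proof -
    have "x $ j = y $ j" for j
      using letter_index[of j] that by force
    then show ?thesis
      by (simp add: vec_eq_iff)
  qed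
  show "\<exists>i<d. deriv (\<lambda>s. \<Psi> i (x + s *\<^sub>R v)) 0 \<noteq> 0" if v: "v \<noteq> 0 \<and> v \<bullet> x = 0" for x v :: "real ^ 'n"
  proof -
    obtain j where "v $ j \<noteq> 0"
      using v by (metis vec_eq_iff zero_index)
    moreover have "deriv (\<lambda>s. word_prod [j] (x + s *\<^sub>R v)) 0 = v $ j"
      by (intro DERIV_imp_deriv) (auto intro!: derivative_eq_intros)
    ultimately show ?thesis
      using letter_index[of j] by auto
  qed
qed

lemma sphere_quadratic_embedding:
  fixes X :: "real ^ 'n \<Rightarrow> real ^ 'n"
  assumes "sphere_polynomic_le m X"
  defines "d \<equiv> 2 * card {w :: 'n list. w \<noteq> [] \<and> length w \<le> Suc m}"
  shows "\<exists>\<Psi> B. sphere_smooth_embedding d \<Psi> \<and> (\<forall>i<d. \<forall>j<d. \<forall>k<d. B i j k = - B k j i) \<and>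
     (\<forall>\<gamma>. (\<forall>t. \<gamma> t \<in> sphere 0 1) \<and> (\<forall>t. (\<gamma> has_vector_derivative X (\<gamma> t)) (at t)) \<longrightarrow>
        (\<forall>t. \<forall>i<d. ((\<lambda>s. \<Psi> i (\<gamma> s)) has_real_derivative quad_field d B (\<lambda>j. \<Psi> j (\<gamma> t)) i) (at t))) \<and>
     quad_div_free d B"
proof -
  obtain P :: "real ^ 'n \<Rightarrow> real ^ 'n" where P_poly: "\<forall>i. poly_fun_le m (\<lambda>x. P x $ i)"
    and P_tangent: "\<forall>x\<in>sphere 0 1. P x \<bullet> x = 0" and XP: "\<forall>x\<in>sphere 0 1. X x = P x"
    using assms(1) unfolding sphere_polynomic_le_def by (elim exE conjE)
  define I :: "'n list set" where "I = {w. w \<noteq> [] \<and> length w \<le> Suc m}"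
  have "finite I"
    unfolding I_def by (rule finite_subset[OF _ finite_lists_length_le_UNIV]) auto
  have "\<exists>c. \<forall>x. P x $ i = (\<Sum>w | length w \<le> m. c w * word_prod w x)" for i
    by (rule poly_fun_le_word_expansion[OF P_poly[rule_format]]) blast
  then obtain C where C: "\<And>i x. P x $ i = (\<Sum>w | length w \<le> m. C i w * word_prod w x)"
    using choice[of "\<lambda>i c. \<forall>x. P x $ i = (\<Sum>w | length w \<le> m. c w * word_prod w x)"] by blast
  define \<rho> where "\<rho> i b j = (if b \<noteq> [] \<and> hd b = j then C i (tl b) else 0)" for i b j
  have P_times_coord: "P x $ i * x $ j = (\<Sum>b\<in>I. \<rho> i b j * word_prod b x)" for x i j
  proof -
    have "P x $ i * x $ j = (\<Sum>w | length w \<le> m. C i (tl (j # w)) * word_prod (j # w) x)"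
      by (simp add: C sum_distrib_left sum_distrib_right mult_ac)
    also have "\<dots> = (\<Sum>b\<in>(#) j ` {w. length w \<le> m}. C i (tl b) * word_prod b x)"
      by (simp add: sum.reindex)
    also have "\<dots> = (\<Sum>b\<in>I. \<rho> i b j * word_prod b x)"
      using \<open>finite I\<close> by (intro sum.mono_neutral_cong_left) (auto simp: I_def \<rho>_def neq_Nil_conv)
    finally show ?thesis .
  qed
  define \<omega> where "\<omega> i b j = \<rho> i b j - \<rho> j b i" for i b j
  define \<Omega> where "\<Omega> x i j = (\<Sum>b\<in>I. \<omega> i b j * word_prod b x)" for x i j
  have P_rotation: "P x $ i = (\<Sum>j\<in>UNIV. \<Omega> x i j * x $ j)" if "x \<in> sphere 0 1" for x i
  proof -
    have "\<Omega> x i j = P x $ i * x $ j - P x $ j * x $ i" for j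
      by (simp add: \<Omega>_def \<omega>_def P_times_coord left_diff_distrib sum_subtractf)
    moreover have "x \<bullet> x = 1"
      using that by (simp add: dot_square_norm)
    ultimately show ?thesis
      using tangent_vector_eq_rotation[of x "P x" i] P_tangent that by simp
  qed
  define W where "W a b c = tensor_lift (\<lambda>i j. \<omega> i b j) a c" for a b c
  have W_skew: "W a b c = - W c b a" for a b c
    unfolding W_def by (rule tensor_lift_skew) (simp add: \<omega>_def)
  have word_dynamics: "(\<Sum>v | length v = length a. tensor_lift (\<Omega> x) a v * word_prod v x)
      = (\<Sum>b\<in>I. \<Sum>c\<in>I. W a b c * word_prod b x * word_prod c x)" if "a \<in> I" for a x
  proof -
    have "{v. length v = length a} \<subseteq> I"
      using that by (auto simp: I_def)
    then have "(\<Sum>v | length v = length a. tensor_lift (\<Omega> x) a v * word_prod v x)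
        = (\<Sum>c\<in>I. tensor_lift (\<Omega> x) a c * word_prod c x)"
      using \<open>finite I\<close> by (intro sum.mono_neutral_left) (auto simp: tensor_lift_length_neq)
    also have "\<dots> = (\<Sum>c\<in>I. \<Sum>b\<in>I. W a b c * word_prod b x * word_prod c x)"
      unfolding \<Omega>_def[abs_def] tensor_lift_sum W_def by (simp add: sum_distrib_right)
    also have "\<dots> = (\<Sum>b\<in>I. \<Sum>c\<in>I. W a b c * word_prod b x * word_prod c x)"
      by (rule sum.swap)
    finally show ?thesis .
  qed
  have d: "d = 2 * card I"
    by (simp add: d_def I_def)
  obtain e B where e: "e ` {..<d} = I"
    and B_skew: "\<forall>i<d. \<forall>j<d. \<forall>k<d. B i j k = - B k j i" and "quad_div_free d B"
    and quad_field_e: "\<And>i z. i < d \<Longrightarrow> quad_field d B (\<lambda>j. z (e j)) i = (\<Sum>b\<in>I. \<Sum>c\<in>I. W (e i) b c * z b * z c)"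
    by (rule skew_quadratic_doubling[where W = W, OF \<open>finite I\<close> W_skew, folded d]) (rule that)
  define \<Psi> where "\<Psi> j = word_prod (e j)" for j
  have "\<Psi> ` {..<d} = word_prod ` I"
    unfolding \<Psi>_def e[symmetric] by (simp add: image_image)
  then have "sphere_smooth_embedding d \<Psi>"
    by (rule sphere_smooth_embedding_word_prods) (simp add: I_def)
  moreover have "((\<lambda>s. \<Psi> i (\<gamma> s)) has_real_derivative quad_field d B (\<lambda>j. \<Psi> j (\<gamma> t)) i) (at t)"
    if \<gamma>: "\<forall>t. \<gamma> t \<in> sphere 0 1" "\<forall>t. (\<gamma> has_vector_derivative X (\<gamma> t)) (at t)" and "i < d"
    for \<gamma> t i
  proof -
    have "(\<gamma> has_vector_derivative P (\<gamma> t)) (at t)"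
      using \<gamma> XP by metis
    then have "((\<lambda>s. \<gamma> s $ k) has_vector_derivative P (\<gamma> t) $ k) (at t)" for k
      by (rule bounded_linear.has_vector_derivative[OF bounded_linear_vec_nth])
    then have "((\<lambda>s. \<gamma> s $ k) has_real_derivative (\<Sum>j\<in>UNIV. \<Omega> (\<gamma> t) k j * \<gamma> t $ j)) (at t)" for k
      using P_rotation \<gamma>(1) by (simp add: has_real_derivative_iff_has_vector_derivative)
    from word_prod_has_real_derivative[OF this, of "e i"] show ?thesis
      using word_dynamics[of "e i" "\<gamma> t"] quad_field_e[of i "\<lambda>b. word_prod b (\<gamma> t)"] e \<open>i < d\<close>
      by (auto simp: \<Psi>_def)
  qed
  ultimately show ?thesis
    using B_skew \<open>quad_div_free d B\<close> by blast
qed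

theorem proposition2p1:
  shows
  "(\<exists>D :: nat \<Rightarrow> nat. \<forall>m (X :: real ^ 'n \<Rightarrow> real ^ 'n). torus_polynomic_deg m X \<longrightarrow>
      (\<exists>(\<Psi> :: nat \<Rightarrow> real ^ 'n \<Rightarrow> real) (B :: nat \<Rightarrow> nat \<Rightarrow> nat \<Rightarrow> real).
         torus_smooth_embedding (D m) \<Psi> \<and>
         (\<forall>i<D m. \<forall>j<D m. \<forall>k<D m. B i j k = - B k j i) \<and>
         (\<forall>\<gamma> :: real \<Rightarrow> real ^ 'n. (\<forall>t. (\<gamma> has_vector_derivative X (\<gamma> t)) (at t)) \<longrightarrow>
            (\<forall>t. \<forall>i<D m. ((\<lambda>s. \<Psi> i (\<gamma> s)) has_real_derivative
                 quad_field (D m) B (\<lambda>j. \<Psi> j (\<gamma> t)) i) (at t))) \<and>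
         ((\<forall>x. torus_divergence X x = 0) \<longrightarrow> quad_div_free (D m) B)))
   \<and>
   (\<exists>D :: nat \<Rightarrow> nat. \<forall>m (X :: real ^ 'm \<Rightarrow> real ^ 'm). sphere_polynomic_deg m X \<longrightarrow>
      (\<exists>(\<Psi> :: nat \<Rightarrow> real ^ 'm \<Rightarrow> real) (B :: nat \<Rightarrow> nat \<Rightarrow> nat \<Rightarrow> real).
         sphere_smooth_embedding (D m) \<Psi> \<and>
         (\<forall>i<D m. \<forall>j<D m. \<forall>k<D m. B i j k = - B k j i) \<and>
         (\<forall>\<gamma> :: real \<Rightarrow> real ^ 'm. (\<forall>t. \<gamma> t \<in> sphere 0 1) \<and>
              (\<forall>t. (\<gamma> has_vector_derivative X (\<gamma> t)) (at t)) \<longrightarrow>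
            (\<forall>t. \<forall>i<D m. ((\<lambda>s. \<Psi> i (\<gamma> s)) has_real_derivative
                 quad_field (D m) B (\<lambda>j. \<Psi> j (\<gamma> t)) i) (at t))) \<and>
         ((\<forall>x\<in>sphere 0 1. sphere_divergence X x = 0) \<longrightarrow> quad_div_free (D m) B)))"
  apply (intro conjI; rule exI; intro allI impI)
   apply (blast dest: torus_quadratic_embedding torus_polynomic_deg_def[THEN iffD1, THEN conjunct1])
  apply (blast dest: sphere_quadratic_embedding sphere_polynomic_deg_def[THEN iffD1, THEN conjunct1])
  done

end
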